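(* Let $m\ge2$ and $H\le G$, and let $W$ be an $R_mH$-module that is a direct sum of cyclic $R_mH$-submodules $W_k$, each of which is a free $R_m(H/S_k)$-module for some subgroup $S_k\le H$ (acting trivially on $W_k$). Then $W$ does not have property $\mathcal P(H)$.
   Context: $p$ is a prime, $G$ a cyclic group of order $p^n$, $R_m=\mathbb Z/p^m\mathbb Z$. Let $H\le G$ with generator $\tau$. For $m\ge2$, an $R_mH$-module $W$ has property $\mathcal P(H)$ if there exist an integer $s\ge0$ and elements $y,z\in W\setminus\big((\tau^{p^s}-1)W+pW\big)$ such that $(\tau^{p^s}-1)y=p^{m-1}z$. *)

theory Defs
  imports "HOL-Computational_Algebra.Primes"
begin

definition zsmult :: "int \<Rightarrow> 'a::ab_group_add \<Rightarrow> 'a" where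
  "zsmult k x = (if 0 \<le> k then (\<Sum>_<nat k. x) else - (\<Sum>_<nat (- k). x))"

text \<open>An R_m H-module, H cyclic of order p^h generated by tau: the whole type 'a
  with the additive action T of tau, T^(p^h) = id, and p^m W = 0.\<close>
definition RmH_module :: "nat \<Rightarrow> nat \<Rightarrow> nat \<Rightarrow> ('a::ab_group_add \<Rightarrow> 'a) \<Rightarrow> bool" where
  "RmH_module p m h T \<longleftrightarrow>
     (\<forall>x y. T (x + y) = T x + T y) \<and> (T ^^ (p ^ h) = id) \<and>
     (\<forall>x. zsmult (int p ^ m) (x::'a) = 0)"

definition cyclic_submodule :: "('a::ab_group_add \<Rightarrow> 'a) \<Rightarrow> 'a \<Rightarrow> 'a set" where
  "cyclic_submodule T w0 =
     {\<Sum>i<M. zsmult (c i) ((T ^^ i) w0) | c M. True}"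

text \<open>V (a subset of W) is a free R_m(H/S)-module where S = <tau^(p^s)> acts trivially on V,
  so that H/S is cyclic of order p^s generated by the image of tau.\<close>
definition free_quotient_module ::
  "nat \<Rightarrow> nat \<Rightarrow> nat \<Rightarrow> ('a::ab_group_add \<Rightarrow> 'a) \<Rightarrow> 'a set \<Rightarrow> bool" where
  "free_quotient_module p m s T V \<longleftrightarrow>
     (\<forall>w\<in>V. (T ^^ (p ^ s)) w = w) \<and>
     (\<exists>B \<subseteq> V.
        V = {\<Sum>b\<in>B0. \<Sum>i<p ^ s. zsmult (c b i) ((T ^^ i) b) | B0 c. finite B0 \<and> B0 \<subseteq> B} \<and>
        (\<forall>B0 c. finite B0 \<and> B0 \<subseteq> B \<and>
            (\<Sum>b\<in>B0. \<Sum>i<p ^ s. zsmult (c b i) ((T ^^ i) b)) = 0 \<longrightarrow>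
            (\<forall>b\<in>B0. \<forall>i<p ^ s. (int p ^ m) dvd c b i)))"

definition internal_direct_sum :: "('k \<Rightarrow> 'a::ab_group_add set) \<Rightarrow> bool" where
  "internal_direct_sum Wk \<longleftrightarrow>
     (\<forall>w. \<exists>f. finite {k. f k \<noteq> 0} \<and> (\<forall>k. f k \<in> Wk k) \<and> w = sum f {k. f k \<noteq> 0}) \<and>
     (\<forall>f. finite {k. f k \<noteq> 0} \<and> (\<forall>k. f k \<in> Wk k) \<and> sum f {k. f k \<noteq> 0} = 0
          \<longrightarrow> (\<forall>k. f k = 0))"

definition propP :: "nat \<Rightarrow> nat \<Rightarrow> ('a::ab_group_add \<Rightarrow> 'a) \<Rightarrow> bool" where
  "propP p m T \<longleftrightarrow>
     (\<exists>s y z.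
        let D = {(T ^^ (p ^ s)) a - a + zsmult (int p) b | a b. True} in
        y \<notin> D \<and> z \<notin> D \<and> (T ^^ (p ^ s)) y - y = zsmult (int p ^ (m - 1)) z)"

end

theory Submission
  imports Defs "HOL.Modules"
begin

text \<open>Suppose \<open>(\<tau>^(p^s) - 1) y = p^(m-1) z\<close>. Projecting onto the summands reduces the claim to
  a single summand \<open>V\<close>, free over \<open>R\<^sub>m(H/S)\<close> with \<open>S = \<langle>\<tau>^(p^t)\<rangle>\<close>. Expand \<open>z = \<Sum> c\<^sub>b\<^sub>,\<^sub>i \<tau>^i b\<close>
  over a basis and let \<open>g = gcd(p^s, p^t)\<close>. On basis orbits \<open>\<tau>^(p^s)\<close> shifts exponents by
  \<open>p^s\<close> modulo \<open>p^t\<close>, which permutes every residue class of exponents modulo \<open>g\<close>; so summing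
  the coefficients of the relation over such a class kills the \<open>y\<close>-terms, and freeness gives
  \<open>p | \<Sum>\<^bsub>i \<equiv> r (mod g)\<^esub> c\<^sub>b\<^sub>,\<^sub>i\<close>. Since \<open>\<tau>^g - 1\<close> maps \<open>V\<close> into \<open>(\<tau>^(p^s) - 1)V\<close> (it is either
  \<open>\<tau>^(p^s) - 1\<close> or zero), replacing each \<open>\<tau>^i b\<close> by \<open>\<tau>^(i mod g) b\<close> shows
  \<open>z \<in> (\<tau>^(p^s) - 1)W + pW\<close>, contradicting \<open>\<P>(H)\<close>.\<close>

lemma zsmult_0_left [simp]: "zsmult 0 x = 0"
  by (simp add: zsmult_def)

lemma zsmult_add1: "zsmult (k + 1) x = zsmult k x + x"
proof (cases "k \<ge> 0")
  case True
  then have "nat (k + 1) = Suc (nat k)" by simp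
  with True show ?thesis by (simp add: zsmult_def)
next
  case False
  then consider "k = -1" | "nat (- k) = Suc (nat (- (k + 1)))" "k + 1 < 0" by linarith
  then show ?thesis by cases (simp_all add: zsmult_def)
qed

lemma zsmult_diff1: "zsmult (k - 1) x = zsmult k x - x"
  using zsmult_add1[of "k - 1" x] by simp

lemma zsmult_1 [simp]: "zsmult 1 x = x"
  using zsmult_add1[of 0 x] by simp

lemma zsmult_add_left: "zsmult (a + b) x = zsmult a x + zsmult b x"
proof (induction b rule: int_induct[where k = 0])
  case (step1 i)
  then show ?case using zsmult_add1[of "a + i" x] zsmult_add1[of i x] by (simp add: add.assoc)
next
  case (step2 i)
  have "zsmult (a + (i - 1)) x = zsmult (a + i) x - x"
    using zsmult_diff1[of "a + i" x] by (simp add: add_diff_eq)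
  with step2 show ?case by (simp add: zsmult_diff1)
qed simp

lemma zsmult_minus_left: "zsmult (- a) x = - zsmult a x"
  using zsmult_add_left[of a "- a" x] by (simp add: eq_neg_iff_add_eq_0 add.commute)

lemma zsmult_diff_left: "zsmult (a - b) x = zsmult a x - zsmult b x"
  using zsmult_add_left[of a "- b" x] by (simp add: zsmult_minus_left)

lemma zsmult_mult: "zsmult (a * b) x = zsmult a (zsmult b x)"
proof (induction a rule: int_induct[where k = 0])
  case (step1 i)
  then show ?case by (simp add: zsmult_add1 zsmult_add_left distrib_right)
next
  case (step2 i)
  then show ?case by (simp add: zsmult_diff1 zsmult_diff_left left_diff_distrib)
qed simp

lemma zsmult_sum_left: "zsmult (sum c A) x = (\<Sum>i\<in>A. zsmult (c i) x)"
  by (induction A rule: infinite_finite_induct) (simp_all add: zsmult_add_left)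

lemma additive_zsmult: "additive (zsmult k)"
proof
  show "zsmult k (x + y) = zsmult k x + zsmult k y" for x y :: 'a
  proof (induction k rule: int_induct[where k = 0])
    case (step1 i)
    then show ?case by (simp only: zsmult_add1) (simp add: algebra_simps)
  next
    case (step2 i)
    then show ?case by (simp only: zsmult_diff1) (simp add: algebra_simps)
  qed simp
qed

interpretation zsmult_right: additive "zsmult k"
  by (rule additive_zsmult)

lemmas zsmult_0_right [simp] = zsmult_right.zero

lemma (in additive) zsmult: "f (zsmult k x) = zsmult k (f x)"
proof (induction k rule: int_induct[where k = 0])
  case (step1 i)
  then show ?case by (simp add: zsmult_add1 add)
next
  case (step2 i)
  then show ?case by (simp add: zsmult_diff1 diff)
qed (simp add: zero)

lemma additive_funpow:
  fixes f :: "'a::ab_group_add \<Rightarrow> 'a"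
  assumes "additive f"
  shows "additive (f ^^ n)"
  by (induction n) (simp_all add: additive_def additive.add[OF assms])

lemma additive_minus_id:
  fixes f :: "'a::ab_group_add \<Rightarrow> 'a"
  shows "additive f \<Longrightarrow> additive (\<lambda>x. f x - x)"
  by (simp add: additive_def additive.add)

lemma RmH_module_additive: "RmH_module p m h T \<Longrightarrow> additive T"
  by (simp add: RmH_module_def additive_def)

definition diff_p_span :: "('a::ab_group_add \<Rightarrow> 'a) \<Rightarrow> nat \<Rightarrow> nat \<Rightarrow> 'a set" where
  "diff_p_span T p s = {(T ^^ (p ^ s)) a - a + zsmult (int p) b | a b. True}"

lemma propPE:
  assumes "propP p m T"
  obtains s y z where "z \<notin> diff_p_span T p s"
    and "(T ^^ (p ^ s)) y - y = zsmult (int p ^ (m - 1)) z"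
  using assms unfolding propP_def diff_p_span_def Let_def by blast

lemma funpow_diff_in_diff_p_span: "(T ^^ (p ^ s)) x - x \<in> diff_p_span T p s"
  unfolding diff_p_span_def by (rule CollectI, rule exI[of _ x], rule exI[of _ 0]) simp

context
  fixes T :: "'a::ab_group_add \<Rightarrow> 'a"
  assumes T: "additive T"
begin

lemma zero_in_diff_p_span: "0 \<in> diff_p_span T p s"
  unfolding diff_p_span_def
  by (rule CollectI, rule exI[of _ 0], rule exI[of _ 0]) (simp add: additive.zero[OF additive_funpow[OF T]])

lemma add_in_diff_p_span:
  assumes "x \<in> diff_p_span T p s" "y \<in> diff_p_span T p s"
  shows "x + y \<in> diff_p_span T p s"
proof -
  from assms obtain a b a' b' where
    x: "x = (T ^^ (p ^ s)) a - a + zsmult (int p) b" and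
    y: "y = (T ^^ (p ^ s)) a' - a' + zsmult (int p) b'"
    unfolding diff_p_span_def by blast
  have "x + y = (T ^^ (p ^ s)) (a + a') - (a + a') + zsmult (int p) (b + b')"
    unfolding x y by (simp add: additive.add[OF additive_funpow[OF T]] zsmult_right.add algebra_simps)
  then show ?thesis unfolding diff_p_span_def by blast
qed

lemma sum_in_diff_p_span:
  "(\<And>i. i \<in> A \<Longrightarrow> f i \<in> diff_p_span T p s) \<Longrightarrow> sum f A \<in> diff_p_span T p s"
  by (induction A rule: infinite_finite_induct) (simp_all add: zero_in_diff_p_span add_in_diff_p_span)

lemma zsmult_in_diff_p_span:
  assumes "x \<in> diff_p_span T p s"
  shows "zsmult k x \<in> diff_p_span T p s"
proof -
  from assms obtain a b where x: "x = (T ^^ (p ^ s)) a - a + zsmult (int p) b"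
    unfolding diff_p_span_def by blast
  have "zsmult k x = (T ^^ (p ^ s)) (zsmult k a) - zsmult k a + zsmult (int p) (zsmult k b)"
    unfolding x by (simp add: additive.zsmult[OF additive_funpow[OF T]] zsmult_right.add zsmult_right.diff
        flip: zsmult_mult) (simp add: mult.commute)
  then show ?thesis unfolding diff_p_span_def by blast
qed

lemma p_multiple_in_diff_p_span: "zsmult (int p) x \<in> diff_p_span T p s"
  unfolding diff_p_span_def
  by (rule CollectI, rule exI[of _ 0], rule exI[of _ x]) (simp add: additive.zero[OF additive_funpow[OF T]])

end

lemma funpow_minus_funpow_mod_in_diff_p_span:
  fixes T :: "'a::ab_group_add \<Rightarrow> 'a"
  assumes T: "additive T" and period: "(T ^^ (p ^ t)) b = b"
  shows "(T ^^ i) b - (T ^^ (i mod p ^ min s t)) b \<in> diff_p_span T p s"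
proof -
  define g where "g = p ^ min s t"
  have step: "(T ^^ g) ((T ^^ n) b) - (T ^^ n) b \<in> diff_p_span T p s" for n
  proof (cases "s \<le> t")
    case True
    then show ?thesis by (simp add: g_def funpow_diff_in_diff_p_span)
  next
    case False
    have "(T ^^ (p ^ t)) ((T ^^ n) b) = (T ^^ n) ((T ^^ (p ^ t)) b)"
      by (metis add.commute comp_apply funpow_add)
    with False period show ?thesis by (simp add: g_def zero_in_diff_p_span[OF T])
  qed
  have "(T ^^ (g * j + r)) b - (T ^^ r) b \<in> diff_p_span T p s" for j r
  proof (induction j)
    case (Suc j)
    have "(T ^^ (g * Suc j + r)) b - (T ^^ r) b =
        ((T ^^ g) ((T ^^ (g * j + r)) b) - (T ^^ (g * j + r)) b) + ((T ^^ (g * j + r)) b - (T ^^ r) b)"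
      by (simp add: funpow_add add.assoc)
    then show ?case by (simp only: add_in_diff_p_span[OF T step Suc])
  qed (simp add: zero_in_diff_p_span[OF T])
  from this[of "i div g" "i mod g"] show ?thesis by (simp add: g_def)
qed

lemma shift_mod_cancel:
  fixes i q q' P :: nat
  assumes "i < P" and "(q + q') mod P = 0"
  shows "((i + q) mod P + q') mod P = i"
proof -
  have "((i + q) mod P + q') mod P = (i + (q + q') mod P) mod P"
    by (simp add: mod_add_left_eq mod_add_right_eq add.assoc)
  with assms show ?thesis by simp
qed

lemma add_complement_mod:
  fixes q P :: nat
  assumes "0 < P"
  shows "(q + (P - q mod P)) mod P = 0" and "(P - q mod P + q) mod P = 0"
proof -
  have "q = q div P * P + q mod P" by simp
  moreover have "q mod P < P" using assms by simp
  ultimately have "q + (P - q mod P) = q div P * P + P" by linarith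
  then show "(q + (P - q mod P)) mod P = 0" by simp
  then show "(P - q mod P + q) mod P = 0" by (simp add: add.commute)
qed

lemma bij_betw_shift_residue_class:
  fixes P g q r :: nat
  assumes "g dvd P" and "g dvd q"
  shows "bij_betw (\<lambda>i. (i + q) mod P) {i. i < P \<and> i mod g = r} {i. i < P \<and> i mod g = r}"
proof -
  define q' where "q' = P - q mod P"
  have "g dvd q'"
    using assms by (simp add: q'_def dvd_diff_nat dvd_mod)
  have shifts: "((i + a) mod P) mod g = i mod g" if "g dvd a" for i a
    using assms(1) that by (auto simp: mod_mod_cancel elim!: dvdE)
  have cancel: "((i + q) mod P + q') mod P = i" "((i + q') mod P + q) mod P = i" if "i < P" for i
    unfolding q'_def using that add_complement_mod[where P = P and q = q] by (simp_all only: shift_mod_cancel)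
  show ?thesis
    by (rule bij_betw_byWitness[where f' = "\<lambda>i. (i + q') mod P"])
      (auto simp: cancel shifts assms \<open>g dvd q'\<close>)
qed

definition orbit_comb :: "('a::ab_group_add \<Rightarrow> 'a) \<Rightarrow> nat \<Rightarrow> 'a set \<Rightarrow> ('a \<Rightarrow> nat \<Rightarrow> int) \<Rightarrow> 'a" where
  "orbit_comb T P B c = (\<Sum>b\<in>B. \<Sum>i<P. zsmult (c b i) ((T ^^ i) b))"

lemma free_quotient_moduleE:
  assumes "free_quotient_module p m t T V"
  obtains B where "B \<subseteq> V" and "\<And>w. w \<in> V \<Longrightarrow> (T ^^ (p ^ t)) w = w"
    and "V = {orbit_comb T (p ^ t) B0 c | B0 c. finite B0 \<and> B0 \<subseteq> B}"
    and "\<And>B0 c b i. finite B0 \<Longrightarrow> B0 \<subseteq> B \<Longrightarrow> orbit_comb T (p ^ t) B0 c = 0 \<Longrightarrow>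
      b \<in> B0 \<Longrightarrow> i < p ^ t \<Longrightarrow> int p ^ m dvd c b i"
proof -
  have "(\<forall>w\<in>V. (T ^^ (p ^ t)) w = w) \<and>
     (\<exists>B \<subseteq> V. V = {orbit_comb T (p ^ t) B0 c | B0 c. finite B0 \<and> B0 \<subseteq> B} \<and>
        (\<forall>B0 c. finite B0 \<and> B0 \<subseteq> B \<and> orbit_comb T (p ^ t) B0 c = 0 \<longrightarrow>
            (\<forall>b\<in>B0. \<forall>i<p ^ t. int p ^ m dvd c b i)))"
    using assms unfolding free_quotient_module_def orbit_comb_def .
  then obtain B where fixed: "\<forall>w\<in>V. (T ^^ (p ^ t)) w = w" and sub: "B \<subseteq> V"
    and span: "V = {orbit_comb T (p ^ t) B0 c | B0 c. finite B0 \<and> B0 \<subseteq> B}"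
    and indep: "\<forall>B0 c. finite B0 \<and> B0 \<subseteq> B \<and> orbit_comb T (p ^ t) B0 c = 0 \<longrightarrow>
       (\<forall>b\<in>B0. \<forall>i<p ^ t. int p ^ m dvd c b i)"
    by (elim conjE exE)
  show ?thesis
    by (rule that[OF sub _ span]) (use fixed indep in blast)+
qed

lemma orbit_comb_extend:
  assumes "finite B'" and "B \<subseteq> B'"
  shows "orbit_comb T P B c = orbit_comb T P B' (\<lambda>b i. if b \<in> B then c b i else 0)"
  unfolding orbit_comb_def using assms by (intro sum.mono_neutral_cong_left) auto

lemma orbit_comb_diff:
  "orbit_comb T P B c - orbit_comb T P B d = orbit_comb T P B (\<lambda>b i. c b i - d b i)"
  by (simp add: orbit_comb_def zsmult_diff_left sum_subtractf)

lemma zsmult_orbit_comb: "zsmult k (orbit_comb T P B c) = orbit_comb T P B (\<lambda>b i. k * c b i)"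
  by (simp add: orbit_comb_def zsmult_right.sum zsmult_mult)

lemma funpow_orbit_comb:
  assumes T: "additive T" and "0 < P" and period: "\<And>b. b \<in> B \<Longrightarrow> (T ^^ P) b = b"
  shows "(T ^^ n) (orbit_comb T P B c) = orbit_comb T P B (\<lambda>b j. c b ((j + (P - n mod P)) mod P))"
proof -
  let ?shift = "\<lambda>i. (i + n) mod P" and ?unshift = "\<lambda>j. (j + (P - n mod P)) mod P"
  have bij: "bij_betw ?shift {..<P} {..<P}"
    using bij_betw_shift_residue_class[of 1 P n 0] by (simp add: lessThan_def)
  have unshift: "?unshift (?shift i) = i" if "i < P" for i
    using that add_complement_mod[OF \<open>0 < P\<close>] by (simp only: shift_mod_cancel)
  have shift: "(T ^^ n) ((T ^^ i) b) = (T ^^ ?shift i) b" if "b \<in> B" for b i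
    using funpow_mod_eq[OF period[OF that], of "i + n"]
    by (simp only: add.commute[of i n] funpow_add comp_apply)
  have "(\<Sum>i<P. zsmult (c b i) ((T ^^ ?shift i) b)) =
      (\<Sum>i<P. zsmult (c b (?unshift (?shift i))) ((T ^^ ?shift i) b))" for b
    using unshift by (intro sum.cong) auto
  also have "\<dots> b = (\<Sum>j<P. zsmult (c b (?unshift j)) ((T ^^ j) b))" for b
    by (rule sum.reindex_bij_betw[OF bij])
  finally show ?thesis
    unfolding orbit_comb_def
    by (simp add: additive.sum[OF additive_funpow[OF T]] additive.zsmult[OF additive_funpow[OF T]] shift)
qed

lemma orbit_comb_in_diff_p_span:
  fixes T :: "'a::ab_group_add \<Rightarrow> 'a"
  assumes T: "additive T" and "0 < p" and period: "\<And>b. b \<in> B \<Longrightarrow> (T ^^ (p ^ t)) b = b"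
    and dvd: "\<And>b r. b \<in> B \<Longrightarrow> int p dvd (\<Sum>i | i < p ^ t \<and> i mod p ^ min s t = r. c b i)"
  shows "orbit_comb T (p ^ t) B c \<in> diff_p_span T p s"
proof -
  define g where "g = p ^ min s t"
  have "0 < g" using \<open>0 < p\<close> by (simp add: g_def)
  have regroup: "(\<Sum>i<p ^ t. zsmult (c b i) ((T ^^ (i mod g)) b)) =
      (\<Sum>r<g. zsmult (\<Sum>i | i < p ^ t \<and> i mod g = r. c b i) ((T ^^ r) b))" for b
  proof -
    have "(\<Sum>i<p ^ t. zsmult (c b i) ((T ^^ (i mod g)) b)) =
        (\<Sum>r<g. \<Sum>i\<in>{i \<in> {..<p ^ t}. i mod g = r}. zsmult (c b i) ((T ^^ (i mod g)) b))"
      using \<open>0 < g\<close> by (intro sum.group[symmetric]) auto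
    then show ?thesis
      by (simp add: zsmult_sum_left)
  qed
  have "orbit_comb T (p ^ t) B c =
      (\<Sum>b\<in>B. \<Sum>i<p ^ t. zsmult (c b i) ((T ^^ i) b - (T ^^ (i mod g)) b)) +
      (\<Sum>b\<in>B. \<Sum>r<g. zsmult (\<Sum>i | i < p ^ t \<and> i mod g = r. c b i) ((T ^^ r) b))"
    by (simp add: orbit_comb_def zsmult_right.diff sum_subtractf flip: regroup sum.distrib)
  also have "\<dots> \<in> diff_p_span T p s"
  proof (intro add_in_diff_p_span[OF T] sum_in_diff_p_span[OF T])
    fix b i assume "b \<in> B"
    show "zsmult (c b i) ((T ^^ i) b - (T ^^ (i mod g)) b) \<in> diff_p_span T p s"
      unfolding g_def using funpow_minus_funpow_mod_in_diff_p_span[OF T period[OF \<open>b \<in> B\<close>]]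
      by (rule zsmult_in_diff_p_span[OF T])
  next
    fix b r assume "b \<in> B"
    then obtain u where "(\<Sum>i | i < p ^ t \<and> i mod g = r. c b i) = int p * u"
      using dvd unfolding g_def by blast
    then show "zsmult (\<Sum>i | i < p ^ t \<and> i mod g = r. c b i) ((T ^^ r) b) \<in> diff_p_span T p s"
      by (simp add: zsmult_mult p_multiple_in_diff_p_span[OF T])
  qed
  finally show ?thesis .
qed

lemma free_quotient_module_relation_in_diff_p_span:
  fixes T :: "'a::ab_group_add \<Rightarrow> 'a"
  assumes T: "additive T" and "1 < p" and "1 \<le> m"
    and V: "free_quotient_module p m t T V" and "y \<in> V" and "z \<in> V"
    and rel: "(T ^^ (p ^ s)) y - y = zsmult (int p ^ (m - 1)) z"
  shows "z \<in> diff_p_span T p s"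
proof -
  define g where "g = p ^ min s t"
  have "0 < p ^ t" using \<open>1 < p\<close> by simp
  obtain B where "B \<subseteq> V" and fixed: "\<And>w. w \<in> V \<Longrightarrow> (T ^^ (p ^ t)) w = w"
    and span: "V = {orbit_comb T (p ^ t) B0 c | B0 c. finite B0 \<and> B0 \<subseteq> B}"
    and indep: "\<And>B0 c b i. finite B0 \<Longrightarrow> B0 \<subseteq> B \<Longrightarrow> orbit_comb T (p ^ t) B0 c = 0 \<Longrightarrow>
      b \<in> B0 \<Longrightarrow> i < p ^ t \<Longrightarrow> int p ^ m dvd c b i"
    using V by (rule free_quotient_moduleE) blast
  have period: "(T ^^ (p ^ t)) b = b" if "b \<in> B" for b
    using that \<open>B \<subseteq> V\<close> fixed by blast
  obtain B0 c B1 d where "finite B0" "B0 \<subseteq> B" "z = orbit_comb T (p ^ t) B0 c"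
    and "finite B1" "B1 \<subseteq> B" "y = orbit_comb T (p ^ t) B1 d"
    using \<open>y \<in> V\<close> \<open>z \<in> V\<close> unfolding span by blast
  define B2 where "B2 = B0 \<union> B1"
  define c' where "c' b i = (if b \<in> B0 then c b i else 0)" for b i
  define d' where "d' b i = (if b \<in> B1 then d b i else 0)" for b i
  have "finite B2" "B2 \<subseteq> B"
    using \<open>finite B0\<close> \<open>finite B1\<close> \<open>B0 \<subseteq> B\<close> \<open>B1 \<subseteq> B\<close> by (auto simp: B2_def)
  have z: "z = orbit_comb T (p ^ t) B2 c'" and y: "y = orbit_comb T (p ^ t) B2 d'"
    unfolding c'_def d'_def \<open>z = _\<close> \<open>y = _\<close> B2_def
    using \<open>finite B0\<close> \<open>finite B1\<close> by (auto intro: orbit_comb_extend)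
  \<comment> \<open>\<open>\<tau>^(p^s)\<close> sends \<open>\<tau>^i b\<close> to \<open>\<tau>^((i + p^s) mod p^t) b\<close>; \<open>unshift\<close> inverts this on exponents.\<close>
  define unshift where "unshift j = (j + (p ^ t - p ^ s mod (p ^ t))) mod (p ^ t)" for j
  define e where "e b j = d' b (unshift j) - d' b j - int p ^ (m - 1) * c' b j" for b j
  have "(T ^^ (p ^ s)) y = orbit_comb T (p ^ t) B2 (\<lambda>b j. d' b (unshift j))"
    unfolding y unshift_def using period \<open>B2 \<subseteq> B\<close>
    by (intro funpow_orbit_comb[OF T \<open>0 < p ^ t\<close>]) auto
  then have "orbit_comb T (p ^ t) B2 e = (T ^^ (p ^ s)) y - y - zsmult (int p ^ (m - 1)) z"
    unfolding e_def by (simp add: y z orbit_comb_diff zsmult_orbit_comb)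
  then have e_dvd: "int p ^ m dvd e b j" if "b \<in> B2" "j < p ^ t" for b j
    using rel indep[OF \<open>finite B2\<close> \<open>B2 \<subseteq> B\<close>] that by simp
  have "int p dvd (\<Sum>i | i < p ^ t \<and> i mod g = r. c' b i)" if "b \<in> B2" for b r
  proof -
    let ?K = "{i. i < p ^ t \<and> i mod g = r}"
    have "g dvd p ^ t" and "g dvd p ^ s"
      by (simp_all add: g_def le_imp_power_dvd)
    then have "g dvd p ^ t - p ^ s mod (p ^ t)"
      by (simp add: dvd_diff_nat dvd_mod)
    then have "(\<Sum>j\<in>?K. d' b (unshift j)) = (\<Sum>j\<in>?K. d' b j)"
      unfolding unshift_def using \<open>g dvd p ^ t\<close>
      by (intro sum.reindex_bij_betw bij_betw_shift_residue_class)
    moreover have "int p ^ m dvd (\<Sum>j\<in>?K. e b j)"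
      using e_dvd \<open>b \<in> B2\<close> by (intro dvd_sum) auto
    ultimately have "int p ^ (m - 1) * int p dvd int p ^ (m - 1) * (\<Sum>j\<in>?K. c' b j)"
      using \<open>1 \<le> m\<close> by (simp add: e_def sum_subtractf sum_distrib_left power_eq_if[of "int p" m]
          mult.commute dvd_minus_iff)
    then show ?thesis
      using \<open>1 < p\<close> by simp
  qed
  then show ?thesis
    unfolding z g_def using \<open>1 < p\<close> period \<open>B2 \<subseteq> B\<close>
    by (intro orbit_comb_in_diff_p_span[OF T]) auto
qed

lemma cyclic_submoduleI: "x = (\<Sum>i<M. zsmult (c i) ((T ^^ i) w0)) \<Longrightarrow> x \<in> cyclic_submodule T w0"
  unfolding cyclic_submodule_def by blast

lemma cyclic_submodule_add:
  assumes "x \<in> cyclic_submodule T w0" and "y \<in> cyclic_submodule T w0"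
  shows "x + y \<in> cyclic_submodule T w0"
proof -
  obtain c M where x: "x = (\<Sum>i<M. zsmult (c i) ((T ^^ i) w0))"
    using assms(1) unfolding cyclic_submodule_def by blast
  obtain c' M' where y: "y = (\<Sum>i<M'. zsmult (c' i) ((T ^^ i) w0))"
    using assms(2) unfolding cyclic_submodule_def by blast
  define N where "N = max M M'"
  have pad: "(\<Sum>i<L. zsmult (a i) ((T ^^ i) w0)) =
      (\<Sum>i<N. zsmult (if i < L then a i else 0) ((T ^^ i) w0))" if "L \<le> N" for a L
    using that by (intro sum.mono_neutral_cong_left) auto
  have "x + y = (\<Sum>i<N. zsmult ((if i < M then c i else 0) + (if i < M' then c' i else 0)) ((T ^^ i) w0))"
    unfolding x y pad[of M c, OF max.cobounded1[of M M', folded N_def]]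
      pad[of M' c', OF max.cobounded2[of M' M, folded N_def]]
    by (simp add: zsmult_add_left sum.distrib)
  then show ?thesis
    by (rule cyclic_submoduleI)
qed

lemma cyclic_submodule_zsmult:
  assumes "x \<in> cyclic_submodule T w0"
  shows "zsmult k x \<in> cyclic_submodule T w0"
proof -
  from assms obtain c M where "x = (\<Sum>i<M. zsmult (c i) ((T ^^ i) w0))"
    unfolding cyclic_submodule_def by blast
  then have "zsmult k x = (\<Sum>i<M. zsmult (k * c i) ((T ^^ i) w0))"
    by (simp add: zsmult_right.sum zsmult_mult)
  then show ?thesis
    by (rule cyclic_submoduleI)
qed

lemma cyclic_submodule_diff:
  assumes "x \<in> cyclic_submodule T w0" and "y \<in> cyclic_submodule T w0"
  shows "x - y \<in> cyclic_submodule T w0"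
  using cyclic_submodule_add[OF assms(1) cyclic_submodule_zsmult[OF assms(2), of "-1"]]
  by (simp add: zsmult_minus_left)

lemma cyclic_submodule_funpow:
  assumes T: "additive T" and "x \<in> cyclic_submodule T w0"
  shows "(T ^^ n) x \<in> cyclic_submodule T w0"
proof -
  from assms obtain c M where "x = (\<Sum>i<M. zsmult (c i) ((T ^^ i) w0))"
    unfolding cyclic_submodule_def by blast
  then have "(T ^^ n) x = (\<Sum>i<M. zsmult (c i) ((T ^^ (n + i)) w0))"
    by (simp add: additive.sum[OF additive_funpow[OF T]] additive.zsmult[OF additive_funpow[OF T]]
        funpow_add)
  also have "\<dots> = (\<Sum>i<n + M. zsmult (if n \<le> i then c (i - n) else 0) ((T ^^ i) w0))"
  proof -
    have "(\<Sum>i<n + M. zsmult (if n \<le> i then c (i - n) else 0) ((T ^^ i) w0)) =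
        (\<Sum>i\<in>{n..<n + M}. zsmult (c (i - n)) ((T ^^ i) w0))"
      by (intro sum.mono_neutral_cong_right) auto
    also have "\<dots> = (\<Sum>i<M. zsmult (c i) ((T ^^ (n + i)) w0))"
      using sum.shift_bounds_nat_ivl[of "\<lambda>i. zsmult (c (i - n)) ((T ^^ i) w0)" 0 n M]
      by (simp add: add.commute lessThan_atLeast0)
    finally show ?thesis ..
  qed
  finally show ?thesis
    by (rule cyclic_submoduleI)
qed

lemma internal_direct_sum_componentwise:
  assumes ds: "internal_direct_sum Wk" and A: "additive A" and B: "additive B"
    and closed: "\<And>k x x'. x \<in> Wk k \<Longrightarrow> x' \<in> Wk k \<Longrightarrow> A x - B x' \<in> Wk k"
    and rel: "A y = B z"
  obtains fz where "finite {k. fz k \<noteq> 0}" and "\<And>k. fz k \<in> Wk k"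
    and "z = sum fz {k. fz k \<noteq> 0}" and "\<And>k. \<exists>y'\<in>Wk k. A y' = B (fz k)"
proof -
  have decompose: "\<exists>f. finite {k. f k \<noteq> 0} \<and> (\<forall>k. f k \<in> Wk k) \<and> w = sum f {k. f k \<noteq> 0}" for w
    using ds unfolding internal_direct_sum_def by blast
  have unique: "f k = 0" if "sum f {k. f k \<noteq> 0} = 0" "finite {k. f k \<noteq> 0}" "\<And>k. f k \<in> Wk k" for f k
    using ds that unfolding internal_direct_sum_def by blast
  obtain fy where fy: "finite {k. fy k \<noteq> 0}" "\<And>k. fy k \<in> Wk k" "y = sum fy {k. fy k \<noteq> 0}"
    using decompose by blast
  obtain fz where fz: "finite {k. fz k \<noteq> 0}" "\<And>k. fz k \<in> Wk k" "z = sum fz {k. fz k \<noteq> 0}"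
    using decompose by blast
  define F where "F = {k. fy k \<noteq> 0} \<union> {k. fz k \<noteq> 0}"
  define g where "g k = A (fy k) - B (fz k)" for k
  have "finite F" using fy fz by (simp add: F_def)
  have "y = sum fy F" and "z = sum fz F"
    unfolding fy(3) fz(3) using \<open>finite F\<close>
    by (intro sum.mono_neutral_left; force simp: F_def)+
  then have "sum g F = 0"
    using rel by (simp add: g_def sum_subtractf additive.sum[OF A] additive.sum[OF B])
  moreover have support: "{k. g k \<noteq> 0} \<subseteq> F"
    by (auto simp: g_def F_def additive.zero[OF A] additive.zero[OF B])
  moreover have "sum g {k. g k \<noteq> 0} = sum g F"
    by (rule sum.mono_neutral_left[OF \<open>finite F\<close> support]) auto
  ultimately have "sum g {k. g k \<noteq> 0} = 0"
    by simp
  moreover have "finite {k. g k \<noteq> 0}"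
    using support \<open>finite F\<close> by (rule finite_subset)
  moreover have "g k \<in> Wk k" for k
    unfolding g_def using closed fy(2) fz(2) .
  ultimately have "g k = 0" for k
    by (rule unique)
  then have "\<exists>y'\<in>Wk k. A y' = B (fz k)" for k
    using fy(2) unfolding g_def by (metis eq_iff_diff_eq_0)
  with fz show ?thesis
    by (rule that)
qed

theorem corollary4p3:
  fixes p n m h :: nat
    and T :: "'a::ab_group_add \<Rightarrow> 'a"
    and Wk :: "'k \<Rightarrow> 'a set"
  assumes "prime p"
    and "m \<ge> 2"
    and "h \<le> n"
    and "RmH_module p m h T"
    and "internal_direct_sum Wk"
    and "\<forall>k. \<exists>w0. Wk k = cyclic_submodule T w0"
    and "\<forall>k. \<exists>s\<le>h. free_quotient_module p m s T (Wk k)"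
  shows "\<not> propP p m T"
proof
  assume "propP p m T"
  then obtain s y z where "z \<notin> diff_p_span T p s"
    and rel: "(T ^^ (p ^ s)) y - y = zsmult (int p ^ (m - 1)) z"
    by (rule propPE)
  have T: "additive T"
    using assms(4) by (rule RmH_module_additive)
  \<comment> \<open>Cyclicity of the summands is used only to know that they are submodules.\<close>
  have closed: "(T ^^ (p ^ s)) x - x - zsmult (int p ^ (m - 1)) x' \<in> Wk k"
    if "x \<in> Wk k" "x' \<in> Wk k" for x x' k
    using assms(6) that cyclic_submodule_diff cyclic_submodule_funpow[OF T] cyclic_submodule_zsmult
    by metis
  obtain fz where "\<And>k. fz k \<in> Wk k" and "z = sum fz {k. fz k \<noteq> 0}"
    and "\<And>k. \<exists>y'\<in>Wk k. (T ^^ (p ^ s)) y' - y' = zsmult (int p ^ (m - 1)) (fz k)"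
    using internal_direct_sum_componentwise[OF assms(5) additive_minus_id[OF additive_funpow[OF T]]
        additive_zsmult closed rel]
    by blast
  have "fz k \<in> diff_p_span T p s" for k
  proof -
    obtain t where "free_quotient_module p m t T (Wk k)"
      using assms(7) by blast
    moreover obtain y' where "y' \<in> Wk k" "(T ^^ (p ^ s)) y' - y' = zsmult (int p ^ (m - 1)) (fz k)"
      using \<open>\<And>k. \<exists>y'\<in>Wk k. _\<close> by blast
    moreover have "1 < p" "1 \<le> m"
      using prime_gt_1_nat[OF assms(1)] assms(2) by simp_all
    ultimately show ?thesis
      using \<open>fz k \<in> Wk k\<close> free_quotient_module_relation_in_diff_p_span[OF T] by blast
  qed
  then have "z \<in> diff_p_span T p s"
    unfolding \<open>z = _\<close> by (intro sum_in_diff_p_span[OF T])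
  with \<open>z \<notin> diff_p_span T p s\<close> show False ..
qed

end
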